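(* Fix $r\in[1,2)$ and assume the hypotheses of the context. Then there is a constant $C\ge0$ such that for all $x,y\in H$, $\mu,\beta\in\mathcal P_2(H)$ and $p,p'\in H$, $$|\mathcal H(x,\mu,p)-\mathcal H(x,\mu,p')|\le C(1+|x|+\mathcal M_r^{1/r}(\mu)+|p|+|p'|)|p-p'|,$$ $$|\mathcal H(x,\mu,p)-\mathcal H(y,\beta,p)|\le C(|x-y|+d_r(\mu,\beta))(1+|p|).$$
   Context: $H,\Lambda$ real separable Hilbert spaces ($H$: inner product $\langle\cdot,\cdot\rangle$, norm $|\cdot|$; $\Lambda$: norm $|\cdot|_\Lambda$), $\tilde\Lambda\subset\Lambda$ convex. $B\in L(H)$ self-adjoint strictly positive, $|x|_{-1}^2=\langle Bx,x\rangle$. $\mathcal P_r(H)$, $\mathcal M_r(\mu)=\int|x|^rd\mu$, $d_r$ the $r$-Wasserstein distance; $\mathcal M_{-1,r},d_{-1,r}$ the analogues computed with $|\cdot|_{-1}$. Hypotheses ($C,C_1\ge0$, $C_2,C_3>0$; all $x,y\in H,\mu,\beta\in\mathcal P_2(H),q\in\tilde\Lambda$): $f=f_1+f_2$ with $f_1:H\times\mathcal P_2(H)\to H$, $f_2:H\times\mathcal P_2(H)\times\Lambda\to H$, $\langle f(x,\mu,q)-f(y,\beta,q),B(x-y)\rangle\le C(|x-y|_{-1}^2+d_{-1,r}^2(\mu,\beta))$, $|f_1(x,\mu)-f_1(y,\beta)|+|f_2(x,\mu,q)-f_2(y,\beta,q)|\le C(|x-y|+d_r(\mu,\beta))$, $|f(x,\mu,q)|_{-1}\le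 C(1+|x|_{-1}+\mathcal M_{-1,r}^{1/r}(\mu)+|q|_\Lambda)$, $|f_2(x,\mu,q)|\le C(1+|q|_\Lambda)$; $l=l_1+l_2$ with $l_1:H\times\mathcal P_2(H)\to\mathbb R$, $l_2:H\times\mathcal P_2(H)\times\Lambda\to\mathbb R$ continuous, $|l_1(x,\mu)-l_1(y,\beta)|+|l_2(x,\mu,q)-l_2(y,\beta,q)|\le C(|x-y|_{-1}+d_{-1,r}(\mu,\beta))$, $-C_1+C_2|q|_\Lambda^2\le l_2(x,\mu,q)\le C_1+C_3|q|_\Lambda^2$. Hamiltonian: $\mathcal H(x,\mu,p)=\inf_{q\in\tilde\Lambda}(\langle f(x,\mu,q),p\rangle+l(x,\mu,q))$. *)

theory Defs
  imports "HOL-Probability.Probability"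
begin

text \<open>Real separable Hilbert spaces are rendered as types of class
  real_inner + complete_space + second_countable_topology.\<close>

definition norm_m1 :: "('h::real_inner \<Rightarrow> 'h) \<Rightarrow> 'h \<Rightarrow> real" where
  "norm_m1 B x = sqrt (inner (B x) x)"

definition P2 :: "('h::real_normed_vector) measure set" where
  "P2 = {\<mu>. sets \<mu> = sets borel \<and> prob_space \<mu> \<and>
              (\<integral>\<^sup>+ x. ennreal ((norm x)\<^sup>2) \<partial>\<mu>) < \<infinity>}"

definition moment :: "('h \<Rightarrow> real) \<Rightarrow> real \<Rightarrow> 'h measure \<Rightarrow> real" where
  "moment nm r \<mu> = enn2real (\<integral>\<^sup>+ x. ennreal (nm x powr r) \<partial>\<mu>)"

definition couplings :: "('h::topological_space) measure \<Rightarrow> 'h measure \<Rightarrow> ('h \<times> 'h) measure set" where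
  "couplings \<mu> \<beta> = {\<gamma>. sets \<gamma> = sets borel \<and> prob_space \<gamma> \<and>
                        distr \<gamma> borel fst = \<mu> \<and> distr \<gamma> borel snd = \<beta>}"

definition wass :: "('h::{real_normed_vector} \<Rightarrow> real) \<Rightarrow> real \<Rightarrow> 'h measure \<Rightarrow> 'h measure \<Rightarrow> real" where
  "wass nm r \<mu> \<beta> =
     enn2real (INF \<gamma>\<in>couplings \<mu> \<beta>. \<integral>\<^sup>+ z. ennreal (nm (fst z - snd z) powr r) \<partial>\<gamma>) powr (1 / r)"

abbreviation d_r :: "real \<Rightarrow> ('h::real_normed_vector) measure \<Rightarrow> 'h measure \<Rightarrow> real" where
  "d_r r \<equiv> wass norm r"

definition Ham ::
  "('h::real_inner \<Rightarrow> 'h measure \<Rightarrow> 'h) \<Rightarrow> ('h \<Rightarrow> 'h measure \<Rightarrow> 'l \<Rightarrow> 'h) \<Rightarrow>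
   ('h \<Rightarrow> 'h measure \<Rightarrow> real) \<Rightarrow> ('h \<Rightarrow> 'h measure \<Rightarrow> 'l \<Rightarrow> real) \<Rightarrow> 'l set \<Rightarrow>
   'h \<Rightarrow> 'h measure \<Rightarrow> 'h \<Rightarrow> real" where
  "Ham f1 f2 l1 l2 Lt x \<mu> p =
     Inf ((\<lambda>q. inner (f1 x \<mu> + f2 x \<mu> q) p + (l1 x \<mu> + l2 x \<mu> q)) ` Lt)"

end

(*
  The running cost grows quadratically in the control q, while the drift f2 grows only linearly.
  Hence, comparing with a fixed admissible control q0, every control that is within 1 of the
  infimum defining H(x,mu,p) satisfies |q| <= R (1 + |p|) with R independent of (x,mu,p).
  Moving p to p' changes the integrand at such controls by at most |f(x,mu,q)| |p - p'|, and
  |f(x,mu,q)| <= |f1(x,mu)| + C (1 + |q|) is bounded linearly in |x|, M_r(mu)^(1/r) and |p'|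
  through the Lipschitz bound of f1 against (0, delta_0). Moving (x,mu) to (y,beta) changes the
  integrand uniformly in q by at most C (|x - y| + d_r(mu,beta)) (|p| + |B|^(1/2)), because
  |.|_{-1} <= |B|^(1/2) |.| also bounds the weak Wasserstein distance by d_r; and infima of
  uniformly close functions are close.
*)
theory Submission
  imports Defs
begin

lemma mult_le_eps_square_plus_square:
  fixes x y e :: real
  assumes "0 < e"
  shows "x * y \<le> e * x\<^sup>2 + y\<^sup>2 / (4 * e)"
proof -
  have "0 \<le> (2 * e * x - y)\<^sup>2 / (4 * e)"
    using assms by simp
  also have "\<dots> = e * x\<^sup>2 + y\<^sup>2 / (4 * e) - x * y"
    using assms by (simp add: field_simps power2_eq_square)
  finally show ?thesis by simp
qed

lemma quadratic_le_linear_bound: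
  fixes a k s t :: real
  assumes "0 < a" "0 \<le> k" "0 \<le> t" "1 \<le> s" and quad: "a * t\<^sup>2 \<le> k * s * (1 + t)"
  shows "t \<le> (2 * k / a + 1) * s"
proof -
  have "t \<le> 2 * k / a * s + s"
  proof (cases "s < t")
    case True
    then have "k * s * (1 + t) \<le> k * s * (2 * t)"
      using assms by (intro mult_left_mono) auto
    then have "(t * a) * t \<le> (2 * k * s) * t"
      using quad by (simp add: power2_eq_square algebra_simps)
    moreover have "0 < t"
      using True assms by linarith
    ultimately have "t * a \<le> 2 * k * s"
      by (rule mult_right_le_imp_le)
    then have "t \<le> 2 * k * s / a"
      using pos_le_divide_eq[OF assms(1)] by blast
    moreover have "2 * k * s / a = 2 * k / a * s"
      by simp
    ultimately show ?thesis
      using assms by linarith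
  next
    case False
    moreover have "0 \<le> 2 * k / a * s"
      using assms by simp
    ultimately show ?thesis
      by linarith
  qed
  then show ?thesis
    by (simp add: ring_distribs)
qed

lemma powr_le_one_plus_square:
  fixes t r :: real
  assumes "0 \<le> t" "0 \<le> r" "r \<le> 2"
  shows "t powr r \<le> 1 + t\<^sup>2"
proof (cases "t \<le> 1")
  case True
  then have "t powr r \<le> 1"
    using assms by (intro powr_le1) auto
  then show ?thesis by (simp add: add_increasing2)
next
  case False
  then have "t powr r \<le> t powr 2"
    using assms by (intro powr_mono) auto
  then show ?thesis
    using False by (simp add: powr_numeral)
qed

lemma Inf_image_le_of_near_minimizers:
  fixes g h :: "'a \<Rightarrow> real"
  assumes "S \<noteq> {}" "bdd_below (g ` S)"
    and near: "\<And>q. q \<in> S \<Longrightarrow> h q \<le> Inf (h ` S) + 1 \<Longrightarrow> g q \<le> h q + d"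
  shows "Inf (g ` S) \<le> Inf (h ` S) + d"
proof (rule field_le_epsilon)
  fix e :: real
  assume "0 < e"
  then obtain q where q: "q \<in> S" "h q < Inf (h ` S) + min e 1"
    using cInf_lessD[of "h ` S" "Inf (h ` S) + min e 1"] assms(1) by auto
  have "Inf (g ` S) \<le> g q"
    using assms(2) q(1) by (simp add: cInf_lower)
  also have "\<dots> \<le> h q + d"
    using q by (intro near) auto
  finally show "Inf (g ` S) \<le> Inf (h ` S) + d + e"
    using q(2) by linarith
qed

lemma abs_Inf_image_diff_le:
  fixes g h :: "'a \<Rightarrow> real"
  assumes "S \<noteq> {}" "bdd_below (g ` S)" "bdd_below (h ` S)"
    and "\<And>q. q \<in> S \<Longrightarrow> \<bar>g q - h q\<bar> \<le> d"
  shows "\<bar>Inf (g ` S) - Inf (h ` S)\<bar> \<le> d"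
proof -
  have "g q \<le> h q + d" "h q \<le> g q + d" if "q \<in> S" for q
    using assms(4)[OF that] by auto
  then have "Inf (g ` S) \<le> Inf (h ` S) + d" "Inf (h ` S) \<le> Inf (g ` S) + d"
    using assms(1-3) by (auto intro!: Inf_image_le_of_near_minimizers)
  then show ?thesis by linarith
qed

lemma INF_mult_left_ennreal:
  fixes c :: ennreal
  assumes "I \<noteq> {}" "c < top"
  shows "c * (INF i\<in>I. f i) = (INF i\<in>I. c * f i)"
proof -
  have "c * Inf (f ` I) = (INF y\<in>f ` I. c * y)"
  proof (rule continuous_at_Inf_mono)
    show "mono ((*) c)"
      by (auto simp: mono_def mult_left_mono)
    show "continuous (at_right (Inf (f ` I))) ((*) c)"
      unfolding continuous_within by (intro ennreal_tendsto_cmult assms(2) tendsto_ident_at)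
  qed (use assms(1) in auto)
  then show ?thesis
    by (simp add: image_comp)
qed

section \<open>Couplings and Wasserstein distances\<close>

lemma couplings_measurable_fst_snd:
  fixes \<gamma> :: "('h::{real_normed_vector, second_countable_topology} \<times> 'h) measure"
  assumes "\<gamma> \<in> couplings \<mu> \<beta>"
  shows "fst \<in> borel_measurable \<gamma>" "snd \<in> borel_measurable \<gamma>"
  using assms unfolding couplings_def
  by (auto intro!: borel_measurable_continuous_onI continuous_intros cong: measurable_cong_sets)

lemma couplings_measurable_cost:
  fixes \<gamma> :: "('h::{real_normed_vector, second_countable_topology} \<times> 'h) measure"
  assumes "\<gamma> \<in> couplings \<mu> \<beta>"
  shows "(\<lambda>z. ennreal (norm (fst z - snd z) powr r)) \<in> borel_measurable \<gamma>"
proof -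
  have "(\<lambda>z. fst z - snd z) \<in> borel_measurable \<gamma>"
    using assms unfolding couplings_def
    by (auto intro!: borel_measurable_continuous_onI continuous_intros cong: measurable_cong_sets)
  then show ?thesis
    by measurable
qed

lemma coupling_nn_integral_fst:
  fixes \<gamma> :: "('h::{real_normed_vector, second_countable_topology} \<times> 'h) measure"
  assumes "\<gamma> \<in> couplings \<mu> \<beta>" "g \<in> borel_measurable borel"
  shows "(\<integral>\<^sup>+ z. g (fst z) \<partial>\<gamma>) = (\<integral>\<^sup>+ x. g x \<partial>\<mu>)"
  using assms couplings_measurable_fst_snd[OF assms(1)]
  by (auto simp: couplings_def nn_integral_distr[symmetric])

lemma coupling_nn_integral_snd:
  fixes \<gamma> :: "('h::{real_normed_vector, second_countable_topology} \<times> 'h) measure"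
  assumes "\<gamma> \<in> couplings \<mu> \<beta>" "g \<in> borel_measurable borel"
  shows "(\<integral>\<^sup>+ z. g (snd z) \<partial>\<gamma>) = (\<integral>\<^sup>+ y. g y \<partial>\<beta>)"
  using assms couplings_measurable_fst_snd[OF assms(1)]
  by (auto simp: couplings_def nn_integral_distr[symmetric])

lemma pair_measure_in_couplings:
  fixes \<mu> \<beta> :: "'h::{real_normed_vector, second_countable_topology} measure"
  assumes "prob_space \<mu>" "prob_space \<beta>" "sets \<mu> = sets borel" "sets \<beta> = sets borel"
  shows "\<mu> \<Otimes>\<^sub>M \<beta> \<in> couplings \<mu> \<beta>"
proof -
  interpret pair_prob_space \<mu> \<beta>
    using assms by (simp add: pair_prob_space.intro pair_sigma_finite.intro prob_space_imp_sigma_finite)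
  have sets: "sets (\<mu> \<Otimes>\<^sub>M \<beta>) = sets (borel :: ('h \<times> 'h) measure)"
    using sets_pair_measure_cong[OF assms(3,4)] borel_prod by metis
  have "distr (\<mu> \<Otimes>\<^sub>M \<beta>) borel fst = distr (\<mu> \<Otimes>\<^sub>M \<beta>) \<mu> fst"
    using assms(3) by (intro distr_cong) auto
  also have "\<dots> = \<mu>"
    by (rule M2.distr_pair_fst)
  finally have fst: "distr (\<mu> \<Otimes>\<^sub>M \<beta>) borel fst = \<mu>" .
  have "distr (\<mu> \<Otimes>\<^sub>M \<beta>) borel snd = distr (\<mu> \<Otimes>\<^sub>M \<beta>) \<beta> snd"
    using assms(4) by (intro distr_cong) auto
  also have "\<dots> = \<beta>"
  proof (rule measure_eqI)
    fix A assume A: "A \<in> sets (distr (\<mu> \<Otimes>\<^sub>M \<beta>) \<beta> snd)"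
    then have "emeasure (distr (\<mu> \<Otimes>\<^sub>M \<beta>) \<beta> snd) A = emeasure (\<mu> \<Otimes>\<^sub>M \<beta>) (space \<mu> \<times> A)"
      by (auto simp: emeasure_distr space_pair_measure dest: sets.sets_into_space
          intro!: arg_cong2[where f=emeasure])
    with A show "emeasure (distr (\<mu> \<Otimes>\<^sub>M \<beta>) \<beta> snd) A = emeasure \<beta> A"
      by (simp add: M2.emeasure_pair_measure_Times M1.emeasure_space_1)
  qed simp
  finally have snd: "distr (\<mu> \<Otimes>\<^sub>M \<beta>) borel snd = \<beta>" .
  show ?thesis
    unfolding couplings_def using sets fst snd P.prob_space_axioms by auto
qed

lemma coupling_cost_finite:
  fixes \<mu> \<beta> :: "'h::{real_normed_vector, second_countable_topology} measure"
  assumes "\<mu> \<in> P2" "\<beta> \<in> P2" "\<gamma> \<in> couplings \<mu> \<beta>" "0 \<le> r" "r \<le> 2"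
  shows "(\<integral>\<^sup>+ z. ennreal (norm (fst z - snd z) powr r) \<partial>\<gamma>) < \<infinity>"
proof -
  let ?m2 = "\<lambda>x::'h. ennreal ((norm x)\<^sup>2)"
  interpret prob_space \<gamma>
    using assms(3) by (simp add: couplings_def)
  have m2_borel [measurable]: "?m2 \<in> borel_measurable borel"
    by measurable
  have m2_meas [measurable]: "(\<lambda>z. ?m2 (fst z)) \<in> borel_measurable \<gamma>" "(\<lambda>z. ?m2 (snd z)) \<in> borel_measurable \<gamma>"
    using couplings_measurable_fst_snd[OF assms(3)] by (auto intro: measurable_compose)
  have pointwise: "ennreal (norm (x - y) powr r) \<le> 1 + 2 * ?m2 x + 2 * ?m2 y" for x y :: 'h
  proof -
    have "norm (x - y) powr r \<le> 1 + (norm (x - y))\<^sup>2"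
      using assms by (intro powr_le_one_plus_square) auto
    moreover have "(norm (x - y))\<^sup>2 \<le> (norm x + norm y)\<^sup>2"
      by (intro power_mono norm_triangle_ineq4) simp
    moreover have "(norm x + norm y)\<^sup>2 \<le> 2 * (norm x)\<^sup>2 + 2 * (norm y)\<^sup>2"
      using zero_le_power2[of "norm x - norm y"] by (simp add: power2_sum power2_diff)
    ultimately have "ennreal (norm (x - y) powr r) \<le> ennreal (1 + 2 * (norm x)\<^sup>2 + 2 * (norm y)\<^sup>2)"
      by (intro ennreal_leI) linarith
    then show ?thesis
      by (simp add: ennreal_plus ennreal_mult)
  qed
  have "(\<integral>\<^sup>+ z. ennreal (norm (fst z - snd z) powr r) \<partial>\<gamma>)
      \<le> (\<integral>\<^sup>+ z. 1 + 2 * ?m2 (fst z) + 2 * ?m2 (snd z) \<partial>\<gamma>)"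
    by (intro nn_integral_mono pointwise)
  also have "\<dots> = 1 + 2 * (\<integral>\<^sup>+ z. ?m2 (fst z) \<partial>\<gamma>) + 2 * (\<integral>\<^sup>+ z. ?m2 (snd z) \<partial>\<gamma>)"
    by (simp add: nn_integral_add nn_integral_cmult m2_meas emeasure_space_1)
  also have "\<dots> = 1 + 2 * (\<integral>\<^sup>+ x. ?m2 x \<partial>\<mu>) + 2 * (\<integral>\<^sup>+ y. ?m2 y \<partial>\<beta>)"
    using coupling_nn_integral_fst[OF assms(3) m2_borel] coupling_nn_integral_snd[OF assms(3) m2_borel]
    by simp
  also have "\<dots> < \<infinity>"
    using assms(1,2) by (simp add: P2_def ennreal_mult_less_top)
  finally show ?thesis .
qed

lemma P2_return_0: "return borel 0 \<in> P2"
  by (auto simp: P2_def prob_space_return nn_integral_return)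

lemma d_r_return_0_le_moment:
  fixes \<mu> :: "'h::{real_normed_vector, second_countable_topology} measure"
  assumes "\<mu> \<in> P2" "0 < r" "r \<le> 2"
  shows "d_r r \<mu> (return borel 0) \<le> moment norm r \<mu> powr (1 / r)"
proof -
  let ?\<delta> = "return borel (0::'h)"
  let ?cost = "\<lambda>\<gamma>. \<integral>\<^sup>+ z. ennreal (norm (fst z - snd z) powr r) \<partial>\<gamma>"
  have \<mu>: "prob_space \<mu>" "sets \<mu> = sets borel"
    using assms(1) by (auto simp: P2_def)
  have coupling: "\<mu> \<Otimes>\<^sub>M ?\<delta> \<in> couplings \<mu> ?\<delta>"
    using \<mu> by (intro pair_measure_in_couplings) (auto simp: prob_space_return)
  interpret pair_prob_space \<mu> ?\<delta>
    using \<mu> by (simp add: pair_prob_space.intro pair_sigma_finite.intro prob_space_imp_sigma_finite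
        prob_space_return)
  have "?cost (\<mu> \<Otimes>\<^sub>M ?\<delta>) = (\<integral>\<^sup>+ x. \<integral>\<^sup>+ y. ennreal (norm (x - y) powr r) \<partial>?\<delta> \<partial>\<mu>)"
    using couplings_measurable_cost[OF coupling] by (simp add: M2.nn_integral_fst[symmetric])
  also have "\<dots> = (\<integral>\<^sup>+ x. ennreal (norm x powr r) \<partial>\<mu>)"
    by (intro nn_integral_cong) (simp add: nn_integral_return)
  finally have cost: "?cost (\<mu> \<Otimes>\<^sub>M ?\<delta>) = (\<integral>\<^sup>+ x. ennreal (norm x powr r) \<partial>\<mu>)" .
  have "?cost (\<mu> \<Otimes>\<^sub>M ?\<delta>) < \<infinity>"
    using assms by (intro coupling_cost_finite[OF _ P2_return_0 coupling]) auto
  then have "enn2real (INF \<gamma>\<in>couplings \<mu> ?\<delta>. ?cost \<gamma>) \<le> moment norm r \<mu>"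
    unfolding moment_def cost[symmetric] by (intro enn2real_mono INF_lower coupling) auto
  then show ?thesis
    unfolding wass_def using assms by (intro powr_mono2) auto
qed

lemma wass_le_mult_d_r:
  fixes \<mu> \<beta> :: "'h::{real_normed_vector, second_countable_topology} measure"
  assumes "\<mu> \<in> P2" "\<beta> \<in> P2" "0 < r" "r \<le> 2" "0 \<le> a"
    and nm: "\<And>z. 0 \<le> nm z \<and> nm z \<le> a * norm z"
  shows "wass nm r \<mu> \<beta> \<le> a * d_r r \<mu> \<beta>"
proof -
  let ?S = "couplings \<mu> \<beta>"
  let ?cost = "\<lambda>\<gamma>. \<integral>\<^sup>+ z. ennreal (norm (fst z - snd z) powr r) \<partial>\<gamma>"
  let ?cost_nm = "\<lambda>\<gamma>. \<integral>\<^sup>+ z. ennreal (nm (fst z - snd z) powr r) \<partial>\<gamma>"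
  define c where "c = ennreal (a powr r)"
  have coupling: "\<mu> \<Otimes>\<^sub>M \<beta> \<in> ?S"
    using assms(1,2) by (intro pair_measure_in_couplings) (auto simp: P2_def)
  have "?cost_nm \<gamma> \<le> c * ?cost \<gamma>" if \<gamma>: "\<gamma> \<in> ?S" for \<gamma>
  proof -
    have "?cost_nm \<gamma> \<le> (\<integral>\<^sup>+ z. c * ennreal (norm (fst z - snd z) powr r) \<partial>\<gamma>)"
    proof (intro nn_integral_mono)
      fix z :: "'h \<times> 'h"
      have "nm (fst z - snd z) powr r \<le> (a * norm (fst z - snd z)) powr r"
        using nm assms(3) by (intro powr_mono2) auto
      then show "ennreal (nm (fst z - snd z) powr r) \<le> c * ennreal (norm (fst z - snd z) powr r)"
        using assms(5) by (simp add: c_def powr_mult ennreal_mult[symmetric] ennreal_leI)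
    qed
    also have "\<dots> = c * ?cost \<gamma>"
      using couplings_measurable_cost[OF \<gamma>] by (rule nn_integral_cmult)
    finally show ?thesis .
  qed
  then have "(INF \<gamma>\<in>?S. ?cost_nm \<gamma>) \<le> (INF \<gamma>\<in>?S. c * ?cost \<gamma>)"
    by (intro INF_mono) auto
  also have "\<dots> = c * (INF \<gamma>\<in>?S. ?cost \<gamma>)"
    using coupling by (intro INF_mult_left_ennreal[symmetric]) (auto simp: c_def)
  finally have "(INF \<gamma>\<in>?S. ?cost_nm \<gamma>) \<le> c * (INF \<gamma>\<in>?S. ?cost \<gamma>)" .
  moreover have "(INF \<gamma>\<in>?S. ?cost \<gamma>) < \<infinity>"
  proof -
    have "(INF \<gamma>\<in>?S. ?cost \<gamma>) \<le> ?cost (\<mu> \<Otimes>\<^sub>M \<beta>)"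
      by (rule INF_lower[OF coupling])
    also have "\<dots> < \<infinity>"
      using assms(3,4) by (intro coupling_cost_finite[OF assms(1,2) coupling]) auto
    finally show ?thesis .
  qed
  ultimately have "enn2real (INF \<gamma>\<in>?S. ?cost_nm \<gamma>) \<le> enn2real (c * (INF \<gamma>\<in>?S. ?cost \<gamma>))"
    by (intro enn2real_mono) (auto simp: c_def ennreal_mult_less_top)
  also have "\<dots> = a powr r * enn2real (INF \<gamma>\<in>?S. ?cost \<gamma>)"
    by (simp add: c_def enn2real_mult)
  finally have "wass nm r \<mu> \<beta> \<le> (a powr r * enn2real (INF \<gamma>\<in>?S. ?cost \<gamma>)) powr (1 / r)"
    unfolding wass_def using assms(3) by (intro powr_mono2) auto
  also have "\<dots> = a * d_r r \<mu> \<beta>"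
    using assms(3,5) by (simp add: wass_def powr_mult powr_powr)
  finally show ?thesis .
qed

lemma norm_le_of_lipschitz_P2:
  fixes F :: "'h::{real_normed_vector, second_countable_topology} \<Rightarrow> 'h measure \<Rightarrow> 'a::real_normed_vector"
  assumes lip: "\<And>x y \<mu> \<beta>. \<mu> \<in> P2 \<Longrightarrow> \<beta> \<in> P2 \<Longrightarrow> norm (F x \<mu> - F y \<beta>) \<le> C * (norm (x - y) + d_r r \<mu> \<beta>)"
    and "0 \<le> C" "0 < r" "r \<le> 2" "\<mu> \<in> P2"
  shows "norm (F x \<mu>) \<le> norm (F 0 (return borel 0)) + C * (norm x + moment norm r \<mu> powr (1 / r))"
proof -
  have "norm (F x \<mu> - F 0 (return borel 0)) \<le> C * (norm x + d_r r \<mu> (return borel 0))"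
    using lip[OF assms(5) P2_return_0, of x 0] by simp
  also have "\<dots> \<le> C * (norm x + moment norm r \<mu> powr (1 / r))"
    using d_r_return_0_le_moment[OF assms(5,3,4)] assms(2) by (simp add: mult_left_mono)
  finally show ?thesis
    using norm_triangle_ineq2[of "F x \<mu>" "F 0 (return borel 0)"] by linarith
qed

lemma norm_m1_bounds:
  fixes B :: "'h::real_inner \<Rightarrow> 'h"
  assumes "bounded_linear B" "\<And>x. 0 \<le> inner (B x) x"
  shows "0 \<le> norm_m1 B z" "norm_m1 B z \<le> sqrt (onorm B) * norm z"
proof -
  have "inner (B z) z \<le> norm (B z) * norm z"
    by (rule norm_cauchy_schwarz)
  also have "\<dots> \<le> onorm B * norm z * norm z"
    using onorm[OF assms(1)] by (simp add: mult_right_mono)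
  finally have "sqrt (inner (B z) z) \<le> sqrt (onorm B * (norm z)\<^sup>2)"
    by (simp add: power2_eq_square mult.assoc)
  then show "norm_m1 B z \<le> sqrt (onorm B) * norm z"
    by (simp add: norm_m1_def real_sqrt_mult)
  show "0 \<le> norm_m1 B z"
    using assms(2) by (simp add: norm_m1_def)
qed

lemma norm_m1_add_wass_le:
  fixes B :: "'h::{real_inner, second_countable_topology} \<Rightarrow> 'h"
  assumes "bounded_linear B" "\<And>x. 0 \<le> inner (B x) x" "\<mu> \<in> P2" "\<beta> \<in> P2" "0 < r" "r \<le> 2"
  shows "norm_m1 B (x - y) + wass (norm_m1 B) r \<mu> \<beta> \<le> sqrt (onorm B) * (norm (x - y) + d_r r \<mu> \<beta>)"
proof -
  have "wass (norm_m1 B) r \<mu> \<beta> \<le> sqrt (onorm B) * d_r r \<mu> \<beta>"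
    using assms norm_m1_bounds[OF assms(1,2)] onorm_pos_le[OF assms(1)] by (intro wass_le_mult_d_r) auto
  then show ?thesis
    using norm_m1_bounds(2)[OF assms(1,2), of "x - y"] by (simp add: distrib_left)
qed

section \<open>Coercive Hamiltonians\<close>

text \<open>One fibre of the Hamiltonian: for a fixed state (x, mu) take b = f2 x mu and m = l2 x mu;
  the control-independent parts f1 x mu and l1 x mu enter as the arguments a and c.\<close>

locale coercive_hamiltonian =
  fixes Lt :: "'l::real_normed_vector set" and q0 :: 'l
    and b :: "'l \<Rightarrow> 'h::real_inner" and m :: "'l \<Rightarrow> real"
    and C C1 C2 C3 :: real
  assumes q0_in: "q0 \<in> Lt"
    and b_bound: "\<And>q. q \<in> Lt \<Longrightarrow> norm (b q) \<le> C * (1 + norm q)"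
    and m_growth: "\<And>q. q \<in> Lt \<Longrightarrow> - C1 + C2 * (norm q)\<^sup>2 \<le> m q \<and> m q \<le> C1 + C3 * (norm q)\<^sup>2"
    and C_nonneg: "0 \<le> C" and C2_pos: "0 < C2"
begin

abbreviation integrand :: "'h \<Rightarrow> real \<Rightarrow> 'h \<Rightarrow> 'l \<Rightarrow> real" where
  "integrand a c p q \<equiv> inner (a + b q) p + (c + m q)"

abbreviation ham :: "'h \<Rightarrow> real \<Rightarrow> 'h \<Rightarrow> real" where
  "ham a c p \<equiv> Inf (integrand a c p ` Lt)"

definition growth_constant :: real where
  "growth_constant = C * (3 + norm q0) + 2 * C1 + C3 * (norm q0)\<^sup>2 + 1"

definition radius :: real where
  "radius = 2 * growth_constant / C2 + 1"

lemma growth_constant_ge: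
  "C * (3 + norm q0) \<le> growth_constant" "2 * C1 + C3 * (norm q0)\<^sup>2 + 1 \<le> growth_constant"
  "1 \<le> growth_constant"
proof -
  have "0 \<le> C2 * (norm q0)\<^sup>2"
    using C2_pos by simp
  then have "0 \<le> 2 * C1 + C3 * (norm q0)\<^sup>2"
    using m_growth[OF q0_in] by linarith
  moreover have "0 \<le> C * (3 + norm q0)"
    using C_nonneg by simp
  ultimately show "C * (3 + norm q0) \<le> growth_constant" "2 * C1 + C3 * (norm q0)\<^sup>2 + 1 \<le> growth_constant"
    "1 \<le> growth_constant"
    by (simp_all add: growth_constant_def)
qed

lemma radius_nonneg: "0 \<le> radius"
  using growth_constant_ge(3) C2_pos by (simp add: radius_def)

lemma abs_inner_b_le:
  assumes "q \<in> Lt"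
  shows "\<bar>inner (b q) p\<bar> \<le> C * (1 + norm q) * norm p"
  using Cauchy_Schwarz_ineq2[of "b q" p] b_bound[OF assms] by (meson mult_right_mono norm_ge_zero order_trans)

lemma integrand_ge:
  assumes "q \<in> Lt"
  shows "inner a p + c - C1 - C * (1 + norm q) * norm p + C2 * (norm q)\<^sup>2 \<le> integrand a c p q"
  using abs_inner_b_le[OF assms, of p] m_growth[OF assms] by (simp add: inner_add_left abs_le_iff)

lemma integrand_le:
  assumes "q \<in> Lt"
  shows "integrand a c p q \<le> inner a p + c + C1 + C * (1 + norm q) * norm p + C3 * (norm q)\<^sup>2"
  using abs_inner_b_le[OF assms, of p] m_growth[OF assms] by (simp add: inner_add_left abs_le_iff)

lemma bdd_below_integrand: "bdd_below (integrand a c p ` Lt)"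
proof (rule bdd_belowI2)
  fix q assume q: "q \<in> Lt"
  have "C * norm q * norm p \<le> C2 * (norm q)\<^sup>2 + (C * norm p)\<^sup>2 / (4 * C2)"
    using mult_le_eps_square_plus_square[OF C2_pos, of "norm q" "C * norm p"] by (simp add: algebra_simps)
  with integrand_ge[OF q, where a=a and c=c and p=p]
  show "inner a p + c - C1 - C * norm p - (C * norm p)\<^sup>2 / (4 * C2) \<le> integrand a c p q"
    by (simp add: algebra_simps)
qed

lemma ham_le_integrand: "q \<in> Lt \<Longrightarrow> ham a c p \<le> integrand a c p q"
  by (intro cInf_lower bdd_below_integrand) auto

lemma near_minimizer_norm_le:
  assumes q: "q \<in> Lt" and near: "integrand a c p q \<le> ham a c p + 1"
  shows "norm q \<le> radius * (1 + norm p)"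
proof -
  have "integrand a c p q \<le> integrand a c p q0 + 1"
    using near ham_le_integrand[OF q0_in, where a=a and c=c and p=p] by linarith
  then have "C2 * (norm q)\<^sup>2 \<le> C * (norm q * norm p) + C * (2 + norm q0) * norm p + (2 * C1 + C3 * (norm q0)\<^sup>2 + 1)"
    using integrand_ge[OF q, where a=a and c=c and p=p] integrand_le[OF q0_in, where a=a and c=c and p=p]
    by (simp add: algebra_simps)
  also have "\<dots> \<le> growth_constant * (1 + norm p) * (1 + norm q)"
  proof -
    have "C * 1 \<le> C * (3 + norm q0)" "C * (2 + norm q0) \<le> C * (3 + norm q0)"
      using C_nonneg by (intro mult_left_mono; simp)+
    then have "C \<le> growth_constant" "C * (2 + norm q0) \<le> growth_constant"
      using growth_constant_ge(1) by linarith+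
    then have "C * (norm q * norm p) \<le> growth_constant * (norm q * norm p)"
      "C * (2 + norm q0) * norm p \<le> growth_constant * norm p"
      by (intro mult_right_mono; simp)+
    moreover have "0 \<le> growth_constant * norm q"
      using growth_constant_ge(3) by simp
    moreover have "growth_constant * (1 + norm p) * (1 + norm q)
        = growth_constant + growth_constant * norm p + growth_constant * norm q
          + growth_constant * (norm q * norm p)"
      by (simp add: algebra_simps)
    ultimately show ?thesis
      using growth_constant_ge(2) by linarith
  qed
  finally show ?thesis
    unfolding radius_def using C2_pos growth_constant_ge(3)
    by (intro quadratic_le_linear_bound) auto
qed

lemma ham_le_ham_plus:
  "ham a c p \<le> ham a c p' + (norm a + C * (1 + radius * (1 + norm p'))) * norm (p - p')"
proof -
  have "integrand a c p q \<le> integrand a c p' q + (norm a + C * (1 + radius * (1 + norm p'))) * norm (p - p')"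
    if q: "q \<in> Lt" and near: "integrand a c p' q \<le> ham a c p' + 1" for q
  proof -
    have "norm q \<le> radius * (1 + norm p')"
      by (rule near_minimizer_norm_le[OF q near])
    then have "C * (1 + norm q) \<le> C * (1 + radius * (1 + norm p'))"
      using C_nonneg by (simp add: mult_left_mono)
    then have "norm (a + b q) \<le> norm a + C * (1 + radius * (1 + norm p'))"
      using norm_triangle_ineq[of a "b q"] b_bound[OF q] by linarith
    then have "inner (a + b q) (p - p') \<le> (norm a + C * (1 + radius * (1 + norm p'))) * norm (p - p')"
      using norm_cauchy_schwarz[of "a + b q" "p - p'"] by (meson mult_right_mono norm_ge_zero order_trans)
    then show ?thesis
      by (simp add: inner_diff_right)
  qed
  then show ?thesis
    using q0_in by (intro Inf_image_le_of_near_minimizers bdd_below_integrand) auto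
qed

lemma abs_ham_diff_le:
  "\<bar>ham a c p - ham a c p'\<bar>
     \<le> (norm a + C * (1 + radius) + C * radius * (norm p + norm p')) * norm (p - p')"
  (is "_ \<le> ?L * _")
proof -
  have "norm a + C * (1 + radius * (1 + norm p'')) \<le> ?L" if "norm p'' \<le> norm p + norm p'" for p''
    using that C_nonneg radius_nonneg mult_left_mono[OF that, of "C * radius"]
    by (simp add: algebra_simps)
  from this[of p'] this[of p] have
    "(norm a + C * (1 + radius * (1 + norm p'))) * norm (p - p') \<le> ?L * norm (p - p')"
    "(norm a + C * (1 + radius * (1 + norm p))) * norm (p' - p) \<le> ?L * norm (p - p')"
    by (auto simp: norm_minus_commute intro!: mult_right_mono)
  with ham_le_ham_plus[where a=a and c=c and p=p and p'=p'] ham_le_ham_plus[where a=a and c=c and p=p' and p'=p] show ?thesis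
    by linarith
qed

end

lemma abs_Ham_diff_le_state:
  assumes "coercive_hamiltonian Lt q0 (f2 x \<mu>) (l2 x \<mu>) C C1 C2 C3"
    and "coercive_hamiltonian Lt q0 (f2 y \<beta>) (l2 y \<beta>) C C1 C2 C3"
    and f_diff: "\<And>q. q \<in> Lt \<Longrightarrow> norm (f1 x \<mu> - f1 y \<beta>) + norm (f2 x \<mu> q - f2 y \<beta> q) \<le> L"
    and l_diff: "\<And>q. q \<in> Lt \<Longrightarrow> \<bar>l1 x \<mu> - l1 y \<beta>\<bar> + \<bar>l2 x \<mu> q - l2 y \<beta> q\<bar> \<le> L"
  shows "\<bar>Ham f1 f2 l1 l2 Lt x \<mu> p - Ham f1 f2 l1 l2 Lt y \<beta> p\<bar> \<le> L * (1 + norm p)"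
proof -
  interpret x\<mu>: coercive_hamiltonian Lt q0 "f2 x \<mu>" "l2 x \<mu>" C C1 C2 C3 by fact
  interpret y\<beta>: coercive_hamiltonian Lt q0 "f2 y \<beta>" "l2 y \<beta>" C C1 C2 C3 by fact
  have "\<bar>x\<mu>.integrand (f1 x \<mu>) (l1 x \<mu>) p q - y\<beta>.integrand (f1 y \<beta>) (l1 y \<beta>) p q\<bar> \<le> L * (1 + norm p)"
    if q: "q \<in> Lt" for q
  proof -
    let ?df = "(f1 x \<mu> - f1 y \<beta>) + (f2 x \<mu> q - f2 y \<beta> q)"
    let ?dl = "(l1 x \<mu> - l1 y \<beta>) + (l2 x \<mu> q - l2 y \<beta> q)"
    have "\<bar>inner ?df p\<bar> \<le> norm ?df * norm p"
      by (rule Cauchy_Schwarz_ineq2)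
    also have "\<dots> \<le> L * norm p"
      using norm_triangle_ineq[of "f1 x \<mu> - f1 y \<beta>" "f2 x \<mu> q - f2 y \<beta> q"] f_diff[OF q]
      by (intro mult_right_mono) auto
    moreover have "\<bar>?dl\<bar> \<le> L"
      using abs_triangle_ineq[of "l1 x \<mu> - l1 y \<beta>" "l2 x \<mu> q - l2 y \<beta> q"] l_diff[OF q] by linarith
    moreover have "x\<mu>.integrand (f1 x \<mu>) (l1 x \<mu>) p q - y\<beta>.integrand (f1 y \<beta>) (l1 y \<beta>) p q
        = inner ?df p + ?dl"
      by (simp add: inner_diff_left inner_add_left algebra_simps)
    moreover have "L * (1 + norm p) = L * norm p + L"
      by (simp add: algebra_simps)
    ultimately show ?thesis
      using abs_triangle_ineq[of "inner ?df p" ?dl] by linarith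
  qed
  then show ?thesis
    unfolding Ham_def using x\<mu>.q0_in
    by (intro abs_Inf_image_diff_le x\<mu>.bdd_below_integrand y\<beta>.bdd_below_integrand) auto
qed

lemma abs_Ham_diff_le_costate:
  fixes f1 :: "'h::{real_inner, second_countable_topology} \<Rightarrow> 'h measure \<Rightarrow> 'h"
  assumes "coercive_hamiltonian Lt q0 (f2 x \<mu>) (l2 x \<mu>) C C1 C2 C3"
    and f1_lip: "\<And>x y \<mu> \<beta>. \<mu> \<in> P2 \<Longrightarrow> \<beta> \<in> P2 \<Longrightarrow> norm (f1 x \<mu> - f1 y \<beta>) \<le> C * (norm (x - y) + d_r r \<mu> \<beta>)"
    and "0 < r" "r \<le> 2" "\<mu> \<in> P2"
    and K: "norm (f1 0 (return borel 0)) + C * (1 + coercive_hamiltonian.radius q0 C C1 C2 C3) \<le> K"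
  shows "\<bar>Ham f1 f2 l1 l2 Lt x \<mu> p - Ham f1 f2 l1 l2 Lt x \<mu> p'\<bar>
    \<le> K * (1 + norm x + moment norm r \<mu> powr (1 / r) + norm p + norm p') * norm (p - p')"
proof -
  interpret coercive_hamiltonian Lt q0 "f2 x \<mu>" "l2 x \<mu>" C C1 C2 C3 by fact
  let ?F0 = "norm (f1 0 (return borel 0))" and ?M = "moment norm r \<mu> powr (1 / r)"
  have K': "?F0 + C + C * radius \<le> K"
    using K by (simp add: algebra_simps)
  have "0 \<le> ?F0" "0 \<le> C * radius"
    using C_nonneg radius_nonneg by simp_all
  then have "C \<le> K" and "C * radius \<le> K"
    using K' C_nonneg by linarith+
  then have "C * norm x \<le> K * norm x" "C * ?M \<le> K * ?M"
    "C * radius * norm p \<le> K * norm p" "C * radius * norm p' \<le> K * norm p'"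
    by (intro mult_right_mono; simp)+
  moreover have "norm (f1 x \<mu>) \<le> ?F0 + C * norm x + C * ?M"
    using norm_le_of_lipschitz_P2[OF f1_lip C_nonneg assms(3-5), of x] by (simp add: distrib_left)
  moreover have "K * (1 + norm x + ?M + norm p + norm p') = K + K * norm x + K * ?M + K * norm p + K * norm p'"
    "C * radius * (norm p + norm p') = C * radius * norm p + C * radius * norm p'"
    by (simp_all add: algebra_simps)
  ultimately have "norm (f1 x \<mu>) + C * (1 + radius) + C * radius * (norm p + norm p')
      \<le> K * (1 + norm x + ?M + norm p + norm p')"
    using K by linarith
  moreover have "\<bar>Ham f1 f2 l1 l2 Lt x \<mu> p - Ham f1 f2 l1 l2 Lt x \<mu> p'\<bar>
      \<le> (norm (f1 x \<mu>) + C * (1 + radius) + C * radius * (norm p + norm p')) * norm (p - p')"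
    using abs_ham_diff_le[where a = "f1 x \<mu>" and c = "l1 x \<mu>" and p = p and p' = p'] by (simp add: Ham_def)
  ultimately show ?thesis
    by (meson mult_right_mono norm_ge_zero order_trans)
qed

theorem lemma4p10:
  fixes B :: "'h::{real_inner, complete_space, second_countable_topology} \<Rightarrow> 'h"
    and Lt :: "'l::{real_inner, complete_space, second_countable_topology} set"
    and f1 :: "'h \<Rightarrow> 'h measure \<Rightarrow> 'h"
    and f2 :: "'h \<Rightarrow> 'h measure \<Rightarrow> 'l \<Rightarrow> 'h"
    and l1 :: "'h \<Rightarrow> 'h measure \<Rightarrow> real"
    and l2 :: "'h \<Rightarrow> 'h measure \<Rightarrow> 'l \<Rightarrow> real"
    and r C C1 C2 C3 :: real
  assumes r: "1 \<le> r" "r < 2"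
    and Lt: "convex Lt" "Lt \<noteq> {}"
    and B_lin: "bounded_linear B"
    and B_sym: "\<And>x y. inner (B x) y = inner x (B y)"
    and B_pos: "\<And>x. x \<noteq> 0 \<Longrightarrow> inner (B x) x > 0"
    and Cpos: "C \<ge> 0" "C1 \<ge> 0" "C2 > 0" "C3 > 0"
    and f_mono: "\<And>x y \<mu> \<beta> q. \<mu> \<in> P2 \<Longrightarrow> \<beta> \<in> P2 \<Longrightarrow> q \<in> Lt \<Longrightarrow>
        inner ((f1 x \<mu> + f2 x \<mu> q) - (f1 y \<beta> + f2 y \<beta> q)) (B (x - y))
          \<le> C * ((norm_m1 B (x - y))\<^sup>2 + (wass (norm_m1 B) r \<mu> \<beta>)\<^sup>2)"
    and f_lip: "\<And>x y \<mu> \<beta> q. \<mu> \<in> P2 \<Longrightarrow> \<beta> \<in> P2 \<Longrightarrow> q \<in> Lt \<Longrightarrow>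
        norm (f1 x \<mu> - f1 y \<beta>) + norm (f2 x \<mu> q - f2 y \<beta> q)
          \<le> C * (norm (x - y) + d_r r \<mu> \<beta>)"
    and f_growth: "\<And>x \<mu> q. \<mu> \<in> P2 \<Longrightarrow> q \<in> Lt \<Longrightarrow>
        norm_m1 B (f1 x \<mu> + f2 x \<mu> q)
          \<le> C * (1 + norm_m1 B x + moment (norm_m1 B) r \<mu> powr (1 / r) + norm q)"
    and f2_bound: "\<And>x \<mu> q. \<mu> \<in> P2 \<Longrightarrow> q \<in> Lt \<Longrightarrow> norm (f2 x \<mu> q) \<le> C * (1 + norm q)"
    and l1_cont: "\<And>xs x \<mu>s \<mu>. (\<forall>n. \<mu>s n \<in> P2) \<Longrightarrow> \<mu> \<in> P2 \<Longrightarrow> xs \<longlonglongrightarrow> x \<Longrightarrow>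
        (\<lambda>n. d_r 2 (\<mu>s n) \<mu>) \<longlonglongrightarrow> 0 \<Longrightarrow> (\<lambda>n. l1 (xs n) (\<mu>s n)) \<longlonglongrightarrow> l1 x \<mu>"
    and l2_cont: "\<And>xs x \<mu>s \<mu> qs q. (\<forall>n. \<mu>s n \<in> P2) \<Longrightarrow> \<mu> \<in> P2 \<Longrightarrow> xs \<longlonglongrightarrow> x \<Longrightarrow>
        (\<lambda>n. d_r 2 (\<mu>s n) \<mu>) \<longlonglongrightarrow> 0 \<Longrightarrow> qs \<longlonglongrightarrow> q \<Longrightarrow>
        (\<lambda>n. l2 (xs n) (\<mu>s n) (qs n)) \<longlonglongrightarrow> l2 x \<mu> q"
    and l_lip: "\<And>x y \<mu> \<beta> q. \<mu> \<in> P2 \<Longrightarrow> \<beta> \<in> P2 \<Longrightarrow> q \<in> Lt \<Longrightarrow>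
        \<bar>l1 x \<mu> - l1 y \<beta>\<bar> + \<bar>l2 x \<mu> q - l2 y \<beta> q\<bar>
          \<le> C * (norm_m1 B (x - y) + wass (norm_m1 B) r \<mu> \<beta>)"
    and l2_bounds: "\<And>x \<mu> q. \<mu> \<in> P2 \<Longrightarrow> q \<in> Lt \<Longrightarrow>
        - C1 + C2 * (norm q)\<^sup>2 \<le> l2 x \<mu> q \<and> l2 x \<mu> q \<le> C1 + C3 * (norm q)\<^sup>2"
  shows "\<exists>K\<ge>0.
     (\<forall>x \<mu> p p'. \<mu> \<in> P2 \<longrightarrow>
        \<bar>Ham f1 f2 l1 l2 Lt x \<mu> p - Ham f1 f2 l1 l2 Lt x \<mu> p'\<bar>
          \<le> K * (1 + norm x + moment norm r \<mu> powr (1 / r) + norm p + norm p') * norm (p - p')) \<and>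
     (\<forall>x y \<mu> \<beta> p. \<mu> \<in> P2 \<longrightarrow> \<beta> \<in> P2 \<longrightarrow>
        \<bar>Ham f1 f2 l1 l2 Lt x \<mu> p - Ham f1 f2 l1 l2 Lt y \<beta> p\<bar>
          \<le> K * (norm (x - y) + d_r r \<mu> \<beta>) * (1 + norm p))"
proof -
  obtain q0 where q0: "q0 \<in> Lt"
    using Lt(2) by blast
  have coercive: "coercive_hamiltonian Lt q0 (f2 x \<mu>) (l2 x \<mu>) C C1 C2 C3" if "\<mu> \<in> P2" for x \<mu>
    using q0 f2_bound[OF that] l2_bounds[OF that] Cpos by unfold_locales auto
  have f1_lip: "norm (f1 x \<mu> - f1 y \<beta>) \<le> C * (norm (x - y) + d_r r \<mu> \<beta>)"
    if "\<mu> \<in> P2" "\<beta> \<in> P2" for x y \<mu> \<beta>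
    using f_lip[OF that q0, of x y] norm_ge_zero[of "f2 x \<mu> q0 - f2 y \<beta> q0"] by linarith
  have B_nonneg: "0 \<le> inner (B z) z" for z
    using B_pos[of z] by (cases "z = 0") auto
  define R where "R = coercive_hamiltonian.radius q0 C C1 C2 C3"
  define K where "K = norm (f1 0 (return borel 0)) + C * (1 + R + sqrt (onorm B))"
  have "0 \<le> R"
    unfolding R_def using coercive_hamiltonian.radius_nonneg[OF coercive[OF P2_return_0]] .
  then have K: "norm (f1 0 (return borel 0)) + C * (1 + R) \<le> K" "C \<le> K" "C * sqrt (onorm B) \<le> K"
    using Cpos(1) onorm_pos_le[OF B_lin] by (auto simp: K_def algebra_simps)
  show ?thesis
  proof (intro exI[of _ K] conjI allI impI)
    show "0 \<le> K"
      using K(2) Cpos(1) by linarith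
  next
    fix x p p' :: 'h and \<mu> :: "'h measure"
    assume "\<mu> \<in> P2"
    show "\<bar>Ham f1 f2 l1 l2 Lt x \<mu> p - Ham f1 f2 l1 l2 Lt x \<mu> p'\<bar>
        \<le> K * (1 + norm x + moment norm r \<mu> powr (1 / r) + norm p + norm p') * norm (p - p')"
      using r K(1) unfolding R_def
      by (intro abs_Ham_diff_le_costate[where ?f1.0 = f1 and ?f2.0 = f2 and ?l2.0 = l2 and x = x and \<mu> = \<mu>,
          OF coercive[OF \<open>\<mu> \<in> P2\<close>] f1_lip _ _ \<open>\<mu> \<in> P2\<close>]) auto
  next
    fix x y p :: 'h and \<mu> \<beta> :: "'h measure"
    assume P2: "\<mu> \<in> P2" "\<beta> \<in> P2"
    let ?D = "norm (x - y) + d_r r \<mu> \<beta>"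
    have "C * ?D \<le> K * ?D" "C * sqrt (onorm B) * ?D \<le> K * ?D"
      using K(2,3) by (intro mult_right_mono; simp add: wass_def)+
    moreover have "C * (norm_m1 B (x - y) + wass (norm_m1 B) r \<mu> \<beta>) \<le> C * sqrt (onorm B) * ?D"
      using mult_left_mono[OF norm_m1_add_wass_le[OF B_lin B_nonneg P2] Cpos(1)] r by (simp add: mult.assoc)
    ultimately show "\<bar>Ham f1 f2 l1 l2 Lt x \<mu> p - Ham f1 f2 l1 l2 Lt y \<beta> p\<bar> \<le> K * ?D * (1 + norm p)"
      using f_lip[OF P2] l_lip[OF P2]
      by (intro abs_Ham_diff_le_state[OF coercive[OF P2(1), of x] coercive[OF P2(2), of y]])
        (meson order_trans)+
  qed
qed

end
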